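(* Let $0<\kappa<1$ and $\lambda=\sqrt{1-\kappa^2}$. For $\phi$ near $0$ define $$u(\phi)=\int_0^{\phi} F\!\left(\tfrac14,\tfrac34;\tfrac12;\kappa^2\sin^2\theta\right)\,\mathrm{d}\theta ,$$ let $u\mapsto\phi(u)$ be the local inverse near $0$ with $\phi(0)=0$, let $\psi=\psi(u)$ be defined near $u=0$ with $\psi(0)=0$ and $\sin\psi=\kappa\sin\phi$, and set $d=\cos\psi$. Then $d$ satisfies the differential equation $$(d')^2=2\,(1-d)\,(d^2-\lambda^2),$$ where $'$ denotes differentiation with respect to $u$.
   Context: $F(a,b;c;z)$ denotes the Gauss hypergeometric function ${}_2F_1(a,b;c;z)$. *)

theory Defs
  imports "HOL-Analysis.Analysis"
begin

definition hyp2F1 :: "real \<Rightarrow> real \<Rightarrow> real \<Rightarrow> real \<Rightarrow> real" where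
  "hyp2F1 a b c z =
     (\<Sum>n. pochhammer a n * pochhammer b n / (pochhammer c n * fact n) * z ^ n)"

definition uF :: "real \<Rightarrow> real \<Rightarrow> real" where
  "uF \<kappa> \<phi> = (LBINT \<theta>=0..\<phi>. hyp2F1 (1/4) (3/4) (1/2) (\<kappa>\<^sup>2 * (sin \<theta>)\<^sup>2))"

end

theory Submission
  imports Defs
begin

text \<open>Summing the binomial series of (1 + t) powr (-1/2) and (1 - t) powr (-1/2) keeps
  exactly the even terms, which are those of F(1/4,3/4;1/2;t^2). So the integrand of u is
  G(\<kappa> sin \<theta>), where G = even_rsqrt is the even part of 1/sqrt(1 + t), and \<phi>' = 1/G(s) for s = \<kappa> sin \<phi>.
  With d = sqrt(1 - s^2) = cos \<psi> one has (d G(s))^2 = (1 + d)/2 and d' = - s \<kappa> cos \<phi> / (d G(s)),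
  so d'^2 = 2 s^2 (\<kappa>^2 - s^2) / (1 + d); now use s^2 = (1 - d)(1 + d) and \<kappa>^2 - s^2 = d^2 - \<lambda>^2.\<close>

definition even_rsqrt :: "real \<Rightarrow> real" where
  "even_rsqrt t = (1 / sqrt (1 + t) + 1 / sqrt (1 - t)) / 2"

lemma hyp2F1_coeff_eq_gbinomial:
  "pochhammer (1/4::real) m * pochhammer (3/4) m / (pochhammer (1/2) m * fact m) * (t\<^sup>2) ^ m
   = ((-1/2::real) gchoose (2*m)) * t ^ (2*m)"
proof -
  have p: "pochhammer (1/2::real) (2*m) = 4^m * pochhammer (1/4) m * pochhammer (3/4) m"
    using pochhammer_double[of "1/4::real" m] by (simp add: power_mult)
  have f: "fact (2*m) = (4^m * pochhammer (1/2) m * fact m :: real)"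
    using fact_double[of m] by (simp add: power_mult)
  have g: "((-1/2::real) gchoose (2*m)) = pochhammer (1/2) (2*m) / fact (2*m)"
    by (simp add: gbinomial_pochhammer)
  have "pochhammer (1/2::real) m > 0" by (simp add: pochhammer_pos)
  then show ?thesis unfolding g p f
    by (simp add: power_mult power2_eq_square field_simps)
qed

lemma hyp2F1_quarter_eq_even_rsqrt:
  assumes "\<bar>t\<bar> < 1"
  shows "hyp2F1 (1/4) (3/4) (1/2) (t\<^sup>2) = even_rsqrt t"
proof -
  let ?c = "\<lambda>n. (-1/2::real) gchoose n"
  let ?f = "\<lambda>n. (?c n * t^n + ?c n * (-t)^n) / 2"
  have "x powr - (1/2) = 1 / sqrt x" if "x > 0" for x :: real
    using that by (simp add: powr_minus_divide powr_half_sqrt)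
  moreover have "(\<lambda>n. ?c n * t^n) sums (1 + t) powr (-1/2)"
    using gen_binomial_real assms by blast
  moreover have "(\<lambda>n. ?c n * (-t)^n) sums (1 + (-t)) powr (-1/2)"
    using gen_binomial_real assms by (metis abs_minus_cancel)
  ultimately have "?f sums even_rsqrt t"
    using sums_divide[OF sums_add, of _ _ _ _ 2] assms by (simp add: even_rsqrt_def)
  moreover have "?f n = 0" if "n \<notin> range (\<lambda>m. 2*m)" for n
  proof -
    from that have "odd n" by (auto elim: evenE)
    then show ?thesis by simp
  qed
  ultimately have "(\<lambda>m. ?f (2*m)) sums even_rsqrt t"
    using sums_mono_reindex[of "\<lambda>m. 2*m" ?f] by (simp add: strict_mono_def)
  then show ?thesis
    unfolding hyp2F1_def hyp2F1_coeff_eq_gbinomial by (simp add: sums_iff mult.commute)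
qed

lemma even_rsqrt_pos: "\<bar>t\<bar> < 1 \<Longrightarrow> even_rsqrt t > 0"
  unfolding even_rsqrt_def by (auto intro!: add_pos_pos)

lemma sqrt_mult_even_rsqrt_squared:
  assumes "\<bar>t\<bar> < 1"
  shows "(sqrt (1 - t\<^sup>2) * even_rsqrt t)\<^sup>2 = (1 + sqrt (1 - t\<^sup>2)) / 2"
proof -
  define A B where "A = sqrt (1 + t)" and "B = sqrt (1 - t)"
  have pos: "A > 0" "B > 0" and sq: "A\<^sup>2 = 1 + t" "B\<^sup>2 = 1 - t"
    using assms by (auto simp: A_def B_def)
  have AB: "sqrt (1 - t\<^sup>2) = A * B"
    by (simp add: A_def B_def real_sqrt_mult[symmetric] power2_eq_square algebra_simps)
  then have "sqrt (1 - t\<^sup>2) * even_rsqrt t = (A + B) / 2"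
    using pos by (simp add: even_rsqrt_def A_def[symmetric] B_def[symmetric] field_simps)
  then have "(sqrt (1 - t\<^sup>2) * even_rsqrt t)\<^sup>2 = (A\<^sup>2 + B\<^sup>2 + 2 * (A * B)) / 4"
    by (simp only:) (simp add: power_divide power2_sum)
  then show ?thesis
    using sq AB by simp
qed

lemma abs_mult_sin_less_one:
  assumes "\<bar>\<kappa>\<bar> < 1" shows "\<bar>\<kappa> * sin x\<bar> < (1::real)"
proof -
  have "\<bar>\<kappa> * sin x\<bar> \<le> \<bar>\<kappa>\<bar>"
    using abs_sin_le_one[of x] by (simp add: abs_mult mult_left_le)
  then show ?thesis using assms by linarith
qed

lemma uF_eq_integral_even_rsqrt:
  assumes "\<bar>\<kappa>\<bar> < 1"
  shows "uF \<kappa> p = (LBINT \<theta>=0..p. even_rsqrt (\<kappa> * sin \<theta>))"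
  using hyp2F1_quarter_eq_even_rsqrt[OF abs_mult_sin_less_one[OF assms]]
  by (simp add: uF_def power_mult_distrib)

lemma uF_has_real_derivative:
  assumes "\<bar>\<kappa>\<bar> < 1"
  shows "(uF \<kappa> has_real_derivative even_rsqrt (\<kappa> * sin x)) (at x)"
proof -
  define a b where "a = min 0 x - 1" and "b = max 0 x + 1"
  have "1 + \<kappa> * sin y > 0" "1 - \<kappa> * sin y > 0" for y
    using abs_mult_sin_less_one[OF assms, of y] by linarith+
  then have "sqrt (1 + \<kappa> * sin y) \<noteq> 0" "sqrt (1 - \<kappa> * sin y) \<noteq> 0" for y
    by (metis less_irrefl real_sqrt_eq_zero_cancel_iff)+
  then have cont: "continuous_on {a..b} (\<lambda>\<theta>. even_rsqrt (\<kappa> * sin \<theta>))"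
    unfolding even_rsqrt_def by (intro continuous_intros) auto
  have "((\<lambda>p. LBINT \<theta>=ereal 0..p. even_rsqrt (\<kappa> * sin \<theta>)) has_vector_derivative
      even_rsqrt (\<kappa> * sin x)) (at x within {a..b})"
    by (rule interval_integral_FTC2[OF _ _ cont]) (auto simp: a_def b_def)
  then have "((\<lambda>p. LBINT \<theta>=0..p. even_rsqrt (\<kappa> * sin \<theta>)) has_vector_derivative
      even_rsqrt (\<kappa> * sin x)) (at x within {a<..<b})"
    by (simp add: zero_ereal_def) (erule has_vector_derivative_within_subset, auto)
  then have "((\<lambda>p. LBINT \<theta>=0..p. even_rsqrt (\<kappa> * sin \<theta>)) has_vector_derivative
      even_rsqrt (\<kappa> * sin x)) (at x)"
    by (subst (asm) has_vector_derivative_within_open) (auto simp: a_def b_def)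
  moreover have "uF \<kappa> = (\<lambda>p. LBINT \<theta>=0..p. even_rsqrt (\<kappa> * sin \<theta>))"
    using uF_eq_integral_even_rsqrt[OF assms] by blast
  ultimately show ?thesis
    by (simp add: has_real_derivative_iff_has_vector_derivative)
qed

lemma inverse_uF_has_real_derivative:
  assumes "\<bar>\<kappa>\<bar> < 1" and "continuous_on (ball 0 e) \<phi>"
    and "\<And>u. u \<in> ball 0 e \<Longrightarrow> uF \<kappa> (\<phi> u) = u" and "u \<in> ball 0 e"
  shows "(\<phi> has_real_derivative 1 / even_rsqrt (\<kappa> * sin (\<phi> u))) (at u)"
  unfolding divide_inverse mult_1
proof (rule DERIV_inverse_function[where a="-e" and b=e])
  show "(uF \<kappa> has_real_derivative even_rsqrt (\<kappa> * sin (\<phi> u))) (at (\<phi> u))"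
    using uF_has_real_derivative[OF assms(1)] .
  show "even_rsqrt (\<kappa> * sin (\<phi> u)) \<noteq> 0"
    using even_rsqrt_pos[OF abs_mult_sin_less_one[OF assms(1)]] by (metis less_irrefl)
  show "isCont \<phi> u"
    using assms(2,4) by (simp add: continuous_on_eq_continuous_at)
qed (use assms(3,4) in auto)

lemma sqrt_one_minus_sin_squared_has_real_derivative:
  assumes "\<bar>\<kappa>\<bar> < 1" and "(\<phi> has_real_derivative \<phi>') (at u)"
  shows "((\<lambda>v. sqrt (1 - (\<kappa> * sin (\<phi> v))\<^sup>2)) has_real_derivative
           - (\<kappa> * sin (\<phi> u)) * (\<kappa> * cos (\<phi> u)) * \<phi>' / sqrt (1 - (\<kappa> * sin (\<phi> u))\<^sup>2)) (at u)"
proof -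
  have "(\<kappa> * sin (\<phi> u))\<^sup>2 < 1"
    using abs_mult_sin_less_one[OF assms(1)] by (simp add: abs_square_less_1)
  then show ?thesis
    by (auto intro!: derivative_eq_intros assms(2) simp: field_simps power2_eq_square)
qed

lemma sqrt_one_minus_sin_squared_ode:
  assumes "\<bar>\<kappa>\<bar> < 1" and "s = \<kappa> * sin p" and "d = sqrt (1 - s\<^sup>2)"
  shows "(- s * (\<kappa> * cos p) * (1 / even_rsqrt s) / d)\<^sup>2 = 2 * (1 - d) * (d\<^sup>2 - (1 - \<kappa>\<^sup>2))"
proof -
  have "\<bar>s\<bar> < 1" using abs_mult_sin_less_one[OF assms(1)] assms(2) by simp
  then have dG: "(d * even_rsqrt s)\<^sup>2 = (1 + d) / 2"
    using assms(3) sqrt_mult_even_rsqrt_squared by simp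
  have "s\<^sup>2 < 1" using \<open>\<bar>s\<bar> < 1\<close> by (simp add: abs_square_less_1)
  then have d2: "d\<^sup>2 = 1 - s\<^sup>2" and "d > 0"
    using assms(3) by simp_all
  have "(- s * (\<kappa> * cos p) * (1 / even_rsqrt s) / d)\<^sup>2
      = s\<^sup>2 * (\<kappa> * cos p)\<^sup>2 / (d * even_rsqrt s)\<^sup>2"
    by (simp add: power_divide power_mult_distrib)
  also have "(\<kappa> * cos p)\<^sup>2 = d\<^sup>2 - (1 - \<kappa>\<^sup>2)"
    by (simp add: d2 assms(2) cos_squared_eq power_mult_distrib algebra_simps)
  also have "s\<^sup>2 = (1 - d) * (1 + d)"
    using d2 by (simp add: algebra_simps power2_eq_square)
  also have "(1 - d) * (1 + d) * (d\<^sup>2 - (1 - \<kappa>\<^sup>2)) / (d * even_rsqrt s)\<^sup>2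
      = 2 * (1 - d) * (d\<^sup>2 - (1 - \<kappa>\<^sup>2))"
    using \<open>d > 0\<close> unfolding dG by (simp add: field_simps)
  finally show ?thesis .
qed

lemma sqrt_one_minus_sin_inverse_uF_ode:
  assumes "\<bar>\<kappa>\<bar> < 1" and "continuous_on (ball 0 e) \<phi>"
    and "\<And>u. u \<in> ball 0 e \<Longrightarrow> uF \<kappa> (\<phi> u) = u" and "u \<in> ball 0 e"
  defines "d \<equiv> \<lambda>v. sqrt (1 - (\<kappa> * sin (\<phi> v))\<^sup>2)"
  shows "\<exists>D. (d has_real_derivative D) (at u) \<and> D\<^sup>2 = 2 * (1 - d u) * ((d u)\<^sup>2 - (1 - \<kappa>\<^sup>2))"
proof -
  have "(\<phi> has_real_derivative 1 / even_rsqrt (\<kappa> * sin (\<phi> u))) (at u)"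
    by (rule inverse_uF_has_real_derivative[OF assms(1-4)])
  then show ?thesis
    unfolding d_def using sqrt_one_minus_sin_squared_ode[OF assms(1) refl refl]
    by (blast intro: sqrt_one_minus_sin_squared_has_real_derivative[OF assms(1)])
qed

lemma eventually_cos_eq_sqrt:
  assumes "isCont \<psi> 0" and "\<psi> 0 = 0"
  shows "eventually (\<lambda>v. cos (\<psi> v) = sqrt (1 - (sin (\<psi> v))\<^sup>2)) (nhds (0::real))"
proof -
  have "eventually (\<lambda>v. \<psi> v \<in> {-pi/2<..<pi/2}) (at 0)"
    by (rule topological_tendstoD[OF isContD[OF assms(1)]]) (auto simp: assms(2))
  then have "eventually (\<lambda>v. \<psi> v \<in> {-pi/2<..<pi/2}) (nhds 0)"
    using assms(2) by (simp add: eventually_nhds_conv_at)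
  then show ?thesis
    by eventually_elim (simp add: cos_squared_eq[symmetric] cos_gt_zero_pi less_imp_le)
qed

theorem theorem3:
  fixes \<kappa> lam e :: real and \<phi> \<psi> :: "real \<Rightarrow> real"
  assumes "0 < \<kappa>" and "\<kappa> < 1"
    and "lam = sqrt (1 - \<kappa>\<^sup>2)"
    and "0 < e"
    and "continuous_on (ball 0 e) \<phi>" and "\<phi> 0 = 0"
    and "\<And>u. u \<in> ball 0 e \<Longrightarrow> uF \<kappa> (\<phi> u) = u"
    and "continuous_on (ball 0 e) \<psi>" and "\<psi> 0 = 0"
    and "\<And>u. u \<in> ball 0 e \<Longrightarrow> sin (\<psi> u) = \<kappa> * sin (\<phi> u)"
  shows "\<exists>e'>0. \<forall>u. \<bar>u\<bar> < e' \<longrightarrow>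
           (\<exists>D. ((\<lambda>v. cos (\<psi> v)) has_real_derivative D) (at u) \<and>
                D\<^sup>2 = 2 * (1 - cos (\<psi> u)) * ((cos (\<psi> u))\<^sup>2 - lam\<^sup>2))"
proof -
  let ?d = "\<lambda>v. sqrt (1 - (\<kappa> * sin (\<phi> v))\<^sup>2)"
  have k: "\<bar>\<kappa>\<bar> < 1" using assms(1,2) by simp
  have "eventually (\<lambda>v. v \<in> ball 0 e) (nhds 0)"
    using assms(4) by (intro eventually_nhds_in_open) auto
  moreover have "isCont \<psi> 0"
    using assms(4,8) by (simp add: continuous_on_eq_continuous_at)
  note eventually_cos_eq_sqrt[OF this assms(9)]
  ultimately have "eventually (\<lambda>v. v \<in> ball 0 e \<and> cos (\<psi> v) = ?d v) (nhds 0)"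
    by eventually_elim (simp add: assms(10))
  then obtain e' where "e' > 0" and near: "\<And>v. \<bar>v\<bar> < e' \<Longrightarrow> v \<in> ball 0 e \<and> cos (\<psi> v) = ?d v"
    unfolding eventually_nhds_metric dist_real_def by auto
  have lam: "lam\<^sup>2 = 1 - \<kappa>\<^sup>2"
    using assms(3) k by (simp add: abs_square_less_1 less_imp_le)
  show ?thesis
  proof (rule exI[of _ e'], intro conjI allI impI \<open>e' > 0\<close>)
    fix u :: real
    assume "\<bar>u\<bar> < e'"
    then obtain D where "(?d has_real_derivative D) (at u)"
      and "D\<^sup>2 = 2 * (1 - cos (\<psi> u)) * ((cos (\<psi> u))\<^sup>2 - lam\<^sup>2)"
      using sqrt_one_minus_sin_inverse_uF_ode[OF k assms(5,7)] near lam by metis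
    moreover from this(1) have "((\<lambda>v. cos (\<psi> v)) has_real_derivative D) (at u)"
      by (rule has_field_derivative_transform_within_open[where S="ball 0 e'"])
        (use near \<open>\<bar>u\<bar> < e'\<close> in auto)
    ultimately show "\<exists>D. ((\<lambda>v. cos (\<psi> v)) has_real_derivative D) (at u) \<and>
        D\<^sup>2 = 2 * (1 - cos (\<psi> u)) * ((cos (\<psi> u))\<^sup>2 - lam\<^sup>2)"
      by blast
  qed
qed

end
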